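(* Let $k,n,x^*$ be positive integers, $p\in(0,1)$, and let $a$ be a binary string which is a cyclic shift of $10^{a_1}10^{a_2}\cdots10^{a_k}$ with $a_1,\dots,a_k$ nonnegative integers. Put $n'=pn$ and $b_j=a_j-n(1-p)$ for $j\in[k]$. Then there is a function $\mathrm{Sym}(\cdot\,;n,p,b,x^* )$ on $\{0,1,\dots,x^*\}^k$, depending only on $n,p,b,x^*$ and invariant under permutations of its $k$ arguments, such that for every $(x_1,\dots,x_k)\in\{0,\dots,x^*\}^k$, letting $x$ denote the binary string $10^{n+x_1}10^{n+x_2}\cdots10^{n+x_k}$, $$\Pr_{\tilde{x}\sim\mathrm{Del}(x)}[\tilde{x}=a]=\mathrm{Sym}(x;n,p,b,x^* )\sum_{i=1}^{k}\prod_{j=1}^{k}\prod_{h=x_j+1}^{x^*}\left(n'-b_{j+i}+h\right),$$ where indices of $b$ are taken modulo $k$.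
   Context: $0^t$ denotes $t$ consecutive zeros. The circular deletion channel $\mathrm{Del}(x)$ with deletion probability $p$ deletes each bit of $x$ independently with probability $p$ and then returns a uniformly random cyclic shift of the resulting string. *)

theory Defs
  imports Main "HOL-Library.Multiset" Complex_Main
begin

text \<open>Circular deletion channel: each bit of x is deleted independently with
probability p (the kept positions form a set S), then a uniformly random cyclic
shift (rotate r, r uniform in {0..<|S|}) of the remaining string is returned.
del_prob p x a is the probability that the output equals a.\<close>
definition del_prob :: "real \<Rightarrow> bool list \<Rightarrow> bool list \<Rightarrow> real" where
  "del_prob p x a =
     (\<Sum>S\<in>Pow {..<length x}.
        p ^ (length x - card S) * (1 - p) ^ (card S) *
        (if card S = 0 then (if a = [] then 1 else 0)
         else real (card {r\<in>{..<card S}. rotate r (nths x S) = a}) / real (card S)))"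

text \<open>The string 1 0^(c_1) 1 0^(c_2) ... 1 0^(c_k) (True = 1, False = 0).\<close>
definition block_string :: "nat list \<Rightarrow> bool list" where
  "block_string cs = concat (map (\<lambda>c. True # replicate c False) cs)"

end

theory Submission
  imports Defs
begin

(* An output equal to a rotation of a keeps all k ones of x, so it arises from keeping exactly |a|
   positions and rotating; counting these pairs gives p^(|x|-|a|) (1-p)^|a| / |a| times the number
   of ways to embed the rotations of a into x as subsequences.  Only the k rotations beginning with
   a one contribute, namely the block strings of the cyclic shifts of (a_1, ..., a_k), and since
   the ones must be matched in order, shift i contributes prod_j C(n + x_j, a_(i+j)).  Finally
   C(n + x_j, c) = (n + x_j)! / (c! (n + xstar - c)!) * prod_(h = x_j+1..xstar) (n - c + h); the
   factorials form products over all j, hence are symmetric in x.  If some a_j exceeds n + xstar,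
   both sides vanish. *)

section \<open>Cyclic reindexing\<close>

lemma mset_rotate [simp]: "mset (rotate n xs) = mset xs"
  by (metis append_take_drop_id mset_append rotate_drop_take union_commute)

lemma sum_lessThan_mod_shift:
  fixes n s :: nat
  shows "(\<Sum>i<n. f ((i + s) mod n)) = (\<Sum>i<n. f i)"
proof (cases n)
  case (Suc m)
  have inverse: "(i + s + m * s) mod n = i" "(i + m * s + s) mod n = i" if "i < n" for i
  proof -
    have "i + s + m * s = i + n * s" "i + m * s + s = i + n * s" by (simp_all add: Suc)
    then show "(i + s + m * s) mod n = i" "(i + m * s + s) mod n = i"
      using that by (simp_all only: mod_mult_self2 mod_less)
  qed
  show ?thesis
    by (rule sum.reindex_bij_witness[where j = "\<lambda>i. (i + s) mod n"
                                       and i = "\<lambda>i. (i + m * s) mod n"])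
      (simp_all only: lessThan_iff mod_add_left_eq inverse, simp_all add: Suc)
qed simp

lemma sum_lessThan_mod_neg:
  fixes n :: nat
  shows "(\<Sum>i<n. f ((n - i) mod n)) = (\<Sum>i<n. f i)"
  by (rule sum.reindex_bij_witness[where j = "\<lambda>i. (n - i) mod n"
                                     and i = "\<lambda>i. (n - i) mod n"])
    (auto simp: mod_if)

lemma sum_rotations_rotate:
  "(\<Sum>r<length xs. f (rotate r (rotate s xs))) = (\<Sum>r<length xs. f (rotate r xs))"
  using sum_lessThan_mod_shift[where f = "\<lambda>r. f (rotate r xs)" and n = "length xs" and s = s]
  by (simp add: rotate_rotate rotate_conv_mod[of "_ + s"])

lemma card_filter_eq_sum:
  "finite A \<Longrightarrow>
   of_nat (card {x \<in> A. P x}) = (\<Sum>x\<in>A. if P x then 1 else 0 :: 'b :: semiring_1)"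
  using sum_of_bool_eq[of A P, symmetric] by (simp add: of_bool_def Int_def)

lemma card_rotate_eq_swap:
  assumes "length y = length a"
  shows "card {r \<in> {..<length a}. rotate r y = a} = card {r \<in> {..<length a}. rotate r a = y}"
proof -
  let ?L = "length a"
  have rotate_iff: "rotate r y = a \<longleftrightarrow> rotate ((?L - r) mod ?L) a = y" if "r < ?L" for r
  proof -
    have "rotate ((?L - r) mod ?L) a = rotate (?L - r) a"
      by (rule rotate_conv_mod[symmetric])
    moreover have "rotate (?L - r) (rotate r y) = y" "rotate r (rotate (?L - r) a) = a"
      using that assms by (simp_all add: rotate_rotate)
    ultimately show ?thesis by metis
  qed
  have "card {r \<in> {..<?L}. rotate r y = a} = (\<Sum>r<?L. if rotate r y = a then 1 else 0)"
    by (rule card_filter_eq_sum[where 'b = nat, unfolded of_nat_id]) simp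
  also have "\<dots> = (\<Sum>r<?L. (\<lambda>t. if rotate t a = y then 1 else 0) ((?L - r) mod ?L))"
    by (rule sum.cong[OF refl]) (simp add: rotate_iff)
  also have "\<dots> = (\<Sum>r<?L. if rotate r a = y then 1 else 0)"
    by (rule sum_lessThan_mod_neg)
  also have "\<dots> = card {r \<in> {..<?L}. rotate r a = y}"
    by (rule card_filter_eq_sum[where 'b = nat, unfolded of_nat_id, symmetric]) simp
  finally show ?thesis .
qed

section \<open>Counting subsequence embeddings\<close>

definition subseq_count :: "'a list \<Rightarrow> 'a list \<Rightarrow> nat" where
  "subseq_count xs ys = card {S \<in> Pow {..<length xs}. nths xs S = ys}"

lemma subseq_count_Nil: "subseq_count [] ys = (if ys = [] then 1 else 0)"
  by (simp add: subseq_count_def)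

lemma subseq_count_Cons:
  "subseq_count (x # xs) ys =
     card {T \<in> Pow {..<length xs}. x # nths xs T = ys} + subseq_count xs ys"
proof -
  let ?P = "Pow {..<length xs}"
  let ?with0 = "\<lambda>T. insert 0 (Suc ` T)"
  have split: "{S \<in> Pow {..<length (x # xs)}. nths (x # xs) S = ys} =
      ?with0 ` {T \<in> ?P. x # nths xs T = ys} \<union> image Suc ` {T \<in> ?P. nths xs T = ys}"
    (is "?lhs = ?rhs")
  proof (intro equalityI subsetI)
    fix S assume S: "S \<in> ?lhs"
    define T where "T = {j. Suc j \<in> S}"
    have T: "T \<in> ?P" and nths_S: "nths (x # xs) S = (if 0 \<in> S then [x] else []) @ nths xs T"
      using S by (auto simp: T_def nths_Cons)
    have "S = (if 0 \<in> S then ?with0 T else Suc ` T)"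
      by (auto simp: T_def image_iff) (metis not0_implies_Suc)+
    then show "S \<in> ?rhs"
      using S T nths_S by (auto split: if_splits)
  qed (auto simp: nths_Cons image_iff)
  have "inj_on ?with0 ?P"
    by (rule inj_onI) (metis Diff_insert_absorb image_iff inj_Suc inj_image_eq_iff nat.distinct(1))
  then have "card (?with0 ` {T \<in> ?P. x # nths xs T = ys}) = card {T \<in> ?P. x # nths xs T = ys}"
    by (auto intro: card_image inj_on_subset)
  moreover have "card (image Suc ` {T \<in> ?P. nths xs T = ys}) = card {T \<in> ?P. nths xs T = ys}"
    by (intro card_image inj_onI) (simp add: inj_image_eq_iff)
  ultimately show ?thesis
    unfolding subseq_count_def split by (subst card_Un_disjoint) auto
qed

lemma subseq_count_Cons_Cons:
  "subseq_count (x # xs) (y # ys) = (if x = y then subseq_count xs ys else 0) + subseq_count xs (y # ys)"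
  by (subst subseq_count_Cons) (simp add: subseq_count_def)

lemma subseq_count_Nil_right: "subseq_count xs [] = 1"
  by (induction xs) (simp_all add: subseq_count_Nil subseq_count_Cons)

lemma subseq_count_eq_0: "count_list xs c < count_list ys c \<Longrightarrow> subseq_count xs ys = 0"
proof (induction xs arbitrary: ys)
  case Nil
  then show ?case by (auto simp: subseq_count_Nil)
next
  case (Cons x xs)
  then obtain y ys' where ys: "ys = y # ys'" by (cases ys) auto
  have "subseq_count xs ys = 0"
    using Cons by (intro Cons.IH) (auto split: if_splits)
  moreover have "subseq_count xs ys' = 0" if "x = y"
    using Cons that by (intro Cons.IH) (auto simp: ys split: if_splits)
  ultimately show ?case by (simp add: ys subseq_count_Cons_Cons)
qed

(* With equally many v's, the first v of R' must be matched to the first v of R, so the c leading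
   u's are embedded into the m leading u's. *)
lemma subseq_count_replicate_append:
  assumes "u \<noteq> v" and "count_list R v = count_list R' v"
    and "R \<noteq> [] \<Longrightarrow> hd R = v" and "R' \<noteq> [] \<Longrightarrow> hd R' = v"
  shows "subseq_count (replicate m u @ R) (replicate c u @ R') = (m choose c) * subseq_count R R'"
proof (induction m arbitrary: c)
  case 0
  show ?case
  proof (cases c)
    case (Suc c')
    have "subseq_count R (u # replicate c' u @ R') = 0"
    proof (cases R)
      case (Cons r R2)
      then have "count_list R2 v < count_list (u # replicate c' u @ R') v"
        using assms by simp
      then show ?thesis
        using Cons assms by (simp add: subseq_count_Cons_Cons subseq_count_eq_0 del: count_list.simps)
    qed (simp add: subseq_count_Nil)
    then show ?thesis using Suc by simp
  qed simp
next
  case (Suc m)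
  show ?case
  proof (cases c)
    case 0
    then show ?thesis
      using Suc.IH[of 0] assms
      by (cases R') (auto simp: subseq_count_Cons_Cons subseq_count_Nil_right)
  next
    case (Suc c')
    then show ?thesis using Suc.IH[of c'] Suc.IH[of c]
      by (simp add: subseq_count_Cons_Cons algebra_simps)
  qed
qed

section \<open>Block strings\<close>

lemma block_string_Nil [simp]: "block_string [] = []"
  and block_string_Cons [simp]: "block_string (c # cs) = True # replicate c False @ block_string cs"
  and block_string_append: "block_string (cs @ ds) = block_string cs @ block_string ds"
  by (simp_all add: block_string_def)

lemma count_list_block_string_True [simp]: "count_list (block_string cs) True = length cs"
  by (induction cs) auto

lemma length_block_string: "length (block_string cs) = length cs + sum_list cs"
  by (induction cs) auto

lemma hd_block_string: "block_string cs \<noteq> [] \<Longrightarrow> hd (block_string cs)"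
  by (cases cs) auto

lemma subseq_count_block_string:
  "length ys = length cs \<Longrightarrow>
   subseq_count (block_string ys) (block_string cs) = (\<Prod>j<length ys. ys ! j choose cs ! j)"
proof (induction ys cs rule: list_induct2)
  case Nil
  then show ?case by (simp add: subseq_count_Nil)
next
  case (Cons y ys c cs)
  have "subseq_count (replicate y False @ block_string ys) (block_string (c # cs)) = 0"
    using Cons.hyps by (intro subseq_count_eq_0[of _ True]) simp
  then have "subseq_count (block_string (y # ys)) (block_string (c # cs)) =
      (y choose c) * subseq_count (block_string ys) (block_string cs)"
    using Cons.hyps
    by (simp add: subseq_count_Cons_Cons subseq_count_replicate_append hd_block_string)
  then show ?case
    using Cons.IH by (simp only: length_Cons prod.lessThan_Suc_shift) simp
qed

(* The leading one of the source cannot be matched to the leading zero. *)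
lemma subseq_count_block_string_False:
  "length ys = count_list w True \<Longrightarrow> subseq_count (block_string ys) (False # w) = 0"
  by (cases ys)
    (auto simp: subseq_count_Nil subseq_count_Cons_Cons intro!: subseq_count_eq_0[of _ True])

definition block_start :: "nat list \<Rightarrow> nat \<Rightarrow> nat" where
  "block_start cs i = length (block_string (take i cs))"

lemma block_string_take_drop:
  "block_string cs = block_string (take i cs) @ block_string (drop i cs)"
  by (simp flip: block_string_append)

lemma rotate_block_start:
  assumes "i < length cs"
  shows "rotate (block_start cs i) (block_string cs) = block_string (rotate i cs)"
proof -
  have "rotate i cs = drop i cs @ take i cs"
    using assms by (simp add: rotate_drop_take)
  then show ?thesis
    by (subst block_string_take_drop[of _ i]) (simp add: block_start_def rotate_append block_string_append)
qed

lemma block_string_nth_block_start: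
  assumes "i < length cs"
  shows "block_start cs i < length (block_string cs) \<and> block_string cs ! block_start cs i"
proof -
  have "drop i cs = cs ! i # drop (Suc i) cs"
    using assms by (simp add: Cons_nth_drop_Suc)
  then show ?thesis
    by (subst (1 2) block_string_take_drop[of _ i]) (simp add: block_start_def nth_append)
qed

lemma strict_mono_block_start:
  assumes "i < j" and "j \<le> length cs"
  shows "block_start cs i < block_start cs j"
proof -
  from assms have "take j cs = take i cs @ take (j - i) (drop i cs)" and "take (j - i) (drop i cs) \<noteq> []"
    by (simp_all add: take_add[symmetric])
  then show ?thesis by (simp add: block_start_def length_block_string)
qed

lemma inj_on_block_start: "inj_on (block_start cs) {..<length cs}"
  by (rule inj_onI) (metis lessThan_iff linorder_neqE_nat strict_mono_block_start nat_less_le)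

lemma ones_block_string:
  "{t. t < length (block_string cs) \<and> block_string cs ! t} = block_start cs ` {..<length cs}"
proof (rule sym, rule card_subset_eq)
  show "card (block_start cs ` {..<length cs}) =
      card {t. t < length (block_string cs) \<and> block_string cs ! t}"
    using count_list_block_string_True[of cs]
    by (simp add: card_image inj_on_block_start count_list_eq_length_filter length_filter_conv_card)
qed (auto simp: block_string_nth_block_start)

lemma sum_rotations_block_string:
  assumes "\<And>t. t < length (block_string cs) \<Longrightarrow> \<not> block_string cs ! t \<Longrightarrow>
    f (rotate t (block_string cs)) = 0"
  shows "(\<Sum>t<length (block_string cs). f (rotate t (block_string cs))) =
    (\<Sum>i<length cs. f (block_string (rotate i cs)))"
proof -
  have "(\<Sum>t<length (block_string cs). f (rotate t (block_string cs))) =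
      (\<Sum>t\<in>block_start cs ` {..<length cs}. f (rotate t (block_string cs)))"
    by (rule sum.mono_neutral_right) (use assms in \<open>auto simp flip: ones_block_string\<close>)
  also have "\<dots> = (\<Sum>i<length cs. f (block_string (rotate i cs)))"
    by (simp add: sum.reindex inj_on_block_start rotate_block_start)
  finally show ?thesis .
qed

section \<open>The circular deletion channel\<close>

lemma del_prob_eq_sum_subseq_count:
  assumes "a \<noteq> []"
  shows "del_prob p x a = p ^ (length x - length a) * (1 - p) ^ length a / length a *
    (\<Sum>r<length a. real (subseq_count x (rotate r a)))"
proof -
  let ?L = "length a"
  define C where "C = p ^ (length x - ?L) * (1 - p) ^ ?L / ?L"
  have summand: "p ^ (length x - card S) * (1 - p) ^ card S *
      (if card S = 0 then (if a = [] then 1 else 0)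
       else real (card {r\<in>{..<card S}. rotate r (nths x S) = a}) / real (card S)) =
      C * (\<Sum>r<?L. if nths x S = rotate r a then 1 else 0)"
    if "S \<in> Pow {..<length x}" for S
  proof -
    have "{i. i < length x \<and> i \<in> S} = S" using that by auto
    then have length_nths_S: "length (nths x S) = card S" by (simp add: length_nths)
    show ?thesis
    proof (cases "card S = ?L")
      case True
      then have "real (card {r\<in>{..<card S}. rotate r (nths x S) = a}) =
          real (card {r\<in>{..<?L}. rotate r a = nths x S})"
        using card_rotate_eq_swap[of "nths x S" a] length_nths_S by simp
      also have "\<dots> = (\<Sum>r<?L. if nths x S = rotate r a then 1 else 0)"
        by (subst card_filter_eq_sum) (auto intro!: sum.cong)
      finally show ?thesis
        using True assms by (simp add: C_def)
    next
      case False
      then have "rotate r (nths x S) \<noteq> a" for r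
        using length_nths_S by (metis length_rotate)
      moreover have "nths x S \<noteq> rotate r a" for r
        using False length_nths_S by (metis length_rotate)
      ultimately show ?thesis using assms by simp
    qed
  qed
  have "del_prob p x a =
      (\<Sum>S\<in>Pow {..<length x}. C * (\<Sum>r<?L. if nths x S = rotate r a then 1 else 0))"
    unfolding del_prob_def by (rule sum.cong) (simp_all add: summand)
  also have "\<dots> = C * (\<Sum>r<?L. \<Sum>S\<in>Pow {..<length x}. if nths x S = rotate r a then 1 else 0)"
    by (simp add: sum_distrib_left sum.swap[of _ "Pow _"])
  also have "\<dots> = C * (\<Sum>r<?L. real (subseq_count x (rotate r a)))"
    by (simp only: subseq_count_def card_filter_eq_sum finite_Pow_iff finite_lessThan)
  finally show ?thesis by (simp add: C_def)
qed

lemma del_prob_block_string: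
  assumes "length ys = length cs" and "cs \<noteq> []"
  shows "del_prob p (block_string ys) (rotate s (block_string cs)) =
    p ^ (length (block_string ys) - length (block_string cs)) * (1 - p) ^ length (block_string cs)
      / length (block_string cs) *
    (\<Sum>i<length cs. \<Prod>j<length cs. real (ys ! j choose rotate i cs ! j))"
proof -
  let ?x = "block_string ys" and ?z = "block_string cs"
  have "?z \<noteq> []" using assms(2) by (cases cs) auto
  have vanish: "subseq_count ?x (rotate t ?z) = 0" if t: "t < length ?z" and zero: "\<not> ?z ! t" for t
  proof -
    have "rotate t ?z \<noteq> []" and "hd (rotate t ?z) = ?z ! t"
      using \<open>?z \<noteq> []\<close> t by (simp_all add: hd_rotate_conv_nth)
    then obtain w where "rotate t ?z = False # w"
      using zero by (cases "rotate t ?z") auto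
    moreover have "count_list (rotate t ?z) True = length ys"
      using assms(1) by (metis count_list_block_string_True mset_rotate count_mset)
    ultimately show ?thesis by (simp add: subseq_count_block_string_False)
  qed
  have "(\<Sum>r<length ?z. real (subseq_count ?x (rotate r (rotate s ?z)))) =
      (\<Sum>r<length ?z. real (subseq_count ?x (rotate r ?z)))"
    by (rule sum_rotations_rotate)
  also have "\<dots> = (\<Sum>i<length cs. real (subseq_count ?x (block_string (rotate i cs))))"
    by (rule sum_rotations_block_string) (simp add: vanish)
  also have "\<dots> = (\<Sum>i<length cs. \<Prod>j<length cs. real (ys ! j choose rotate i cs ! j))"
    using assms(1) by (simp add: subseq_count_block_string)
  finally show ?thesis
    using \<open>?z \<noteq> []\<close> by (simp add: del_prob_eq_sum_subseq_count)
qed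

section \<open>Factoring the binomial coefficients\<close>

lemma binomial_eq_fact_prod:
  assumes "m \<le> M" and "c \<le> M"
  shows "real (m choose c) = fact m / (fact c * fact (M - c)) * (\<Prod>h=m+1..M. real h - real c)"
proof (cases "c \<le> m")
  case True
  from assms(1) show ?thesis
  proof (induction M rule: dec_induct)
    case base
    then show ?case using True by (simp add: binomial_fact)
  next
    case (step M)
    have "(\<Prod>h=m+1..Suc M. real h - real c) =
        (\<Prod>h=m+1..M. real h - real c) * (real (Suc M) - real c)"
      using step.hyps by (simp add: prod.cl_ivl_Suc)
    moreover have "fact (Suc M - c) = (real (Suc M) - real c) * (fact (M - c) :: real)"
      using step.hyps True by (simp add: Suc_diff_le of_nat_diff)
    moreover have "real (Suc M) - real c \<noteq> 0"
      using step.hyps True by simp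
    ultimately show ?case
      using step.IH by simp
  qed
next
  case False
  then have "(\<Prod>h=m+1..M. real h - real c) = 0"
    using assms by (intro prod_zero) (auto intro!: bexI[of _ c])
  with False show ?thesis by (simp add: binomial_eq_0)
qed

lemma prod_binomial_eq_fact_prod:
  assumes "length ms = length cs" and "\<forall>m\<in>set ms. m \<le> M" and "\<forall>c\<in>set cs. c \<le> M"
  shows "(\<Prod>j<length ms. real (ms ! j choose cs ! j)) =
    (\<Prod>m\<leftarrow>ms. fact m) * (\<Prod>c\<leftarrow>cs. 1 / (fact c * fact (M - c))) *
    (\<Prod>j<length ms. \<Prod>h=ms ! j + 1..M. real h - real (cs ! j))"
proof -
  have "(\<Prod>j<length ms. real (ms ! j choose cs ! j)) =
      (\<Prod>j<length ms. fact (ms ! j) * (1 / (fact (cs ! j) * fact (M - cs ! j))) *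
        (\<Prod>h=ms ! j + 1..M. real h - real (cs ! j)))"
    using assms
    by (intro prod.cong refl) (simp add: binomial_eq_fact_prod[of _ M] del: One_nat_def)
  also have "\<dots> = (\<Prod>m\<leftarrow>ms. fact m) * (\<Prod>c\<leftarrow>cs. 1 / (fact c * fact (M - c))) *
      (\<Prod>j<length ms. \<Prod>h=ms ! j + 1..M. real h - real (cs ! j))"
    using assms(1) unfolding prod.distrib by (simp add: prod.list_conv_set_nth atLeast0LessThan)
  finally show ?thesis .
qed

lemma prod_binomial_eq_0:
  assumes "length ms = length cs" and "\<forall>m\<in>set ms. m \<le> M" and "c \<in> set cs" and "M < c"
  shows "(\<Prod>j<length ms. real (ms ! j choose cs ! j)) = 0"
proof -
  obtain j where "j < length cs" "cs ! j = c"
    using assms(3) by (auto simp: in_set_conv_nth)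
  moreover have "ms ! j < c"
    using assms calculation by (metis le_less_trans nth_mem)
  ultimately show ?thesis
    using assms(1) by (intro prod_zero) (auto intro!: bexI[of _ j] simp: binomial_eq_0)
qed

(* The factor Sym of the statement; it depends on as, which is determined by b, n and p. *)
definition sym_factor :: "real \<Rightarrow> nat \<Rightarrow> nat \<Rightarrow> nat list \<Rightarrow> nat list \<Rightarrow> real" where
  "sym_factor p n X as xs =
     (if \<forall>c\<in>set as. c \<le> n + X then
        p ^ (length (block_string (map ((+) n) xs)) - length (block_string as))
          * (1 - p) ^ length (block_string as) / length (block_string as)
          * (\<Prod>x\<leftarrow>xs. fact (n + x)) * (\<Prod>c\<leftarrow>as. 1 / (fact c * fact (n + X - c)))
      else 0)"

lemma sym_factor_mset_eq:
  assumes "mset ys = mset xs"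
  shows "sym_factor p n X as ys = sym_factor p n X as xs"
proof -
  have "mset (map f ys) = mset (map f xs)" for f :: "nat \<Rightarrow> 'b"
    using assms by simp
  then have "length ys = length xs" "sum_list (map ((+) n) ys) = sum_list (map ((+) n) xs)"
    "(\<Prod>x\<leftarrow>ys. fact (n + x) :: real) = (\<Prod>x\<leftarrow>xs. fact (n + x))"
    by (metis size_mset length_map, metis sum_mset_sum_list, metis prod_mset_prod_list)
  then show ?thesis by (simp add: sym_factor_def length_block_string)
qed

lemma del_prob_block_string_shifted:
  assumes "length xs = length as" and "as \<noteq> []" and "set xs \<subseteq> {0..X}"
  shows "del_prob p (block_string (map ((+) n) xs)) (rotate s (block_string as)) =
    sym_factor p n X as xs *
    (\<Sum>i<length as. \<Prod>j<length as. \<Prod>h=xs ! j + 1..X. real n - real (rotate i as ! j) + real h)"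
proof -
  let ?ys = "map ((+) n) xs" and ?k = "length as"
  have ys_le: "\<forall>y\<in>set ?ys. y \<le> n + X"
    using assms(3) by auto
  have "del_prob p (block_string ?ys) (rotate s (block_string as)) =
      p ^ (length (block_string ?ys) - length (block_string as)) * (1 - p) ^ length (block_string as)
        / length (block_string as) * (\<Sum>i<?k. \<Prod>j<?k. real (?ys ! j choose rotate i as ! j))"
    using assms(1,2) by (simp add: del_prob_block_string)
  also have "\<dots> = sym_factor p n X as xs *
      (\<Sum>i<?k. \<Prod>j<?k. \<Prod>h=xs ! j + 1..X. real n - real (rotate i as ! j) + real h)"
  proof (cases "\<forall>c\<in>set as. c \<le> n + X")
    case True
    have "(\<Prod>j<?k. real (?ys ! j choose rotate i as ! j)) =
        (\<Prod>x\<leftarrow>xs. fact (n + x)) * (\<Prod>c\<leftarrow>as. 1 / (fact c * fact (n + X - c))) *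
        (\<Prod>j<?k. \<Prod>h=xs ! j + 1..X. real n - real (rotate i as ! j) + real h)" for i
    proof -
      have "(\<Prod>c\<leftarrow>rotate i as. f c) = (\<Prod>c\<leftarrow>as. f c)" for f :: "nat \<Rightarrow> real"
        by (metis mset_map mset_rotate prod_mset_prod_list)
      moreover have "(\<Prod>h=n + xs ! j + 1..n + X. real h - real c) =
          (\<Prod>h=xs ! j + 1..X. real n - real c + real h)" for j c
        using prod.shift_bounds_cl_nat_ivl[of "\<lambda>h. real h - real c" "xs ! j + 1" n X]
        by (simp add: algebra_simps)
      ultimately show ?thesis
        using prod_binomial_eq_fact_prod[of ?ys "rotate i as" "n + X"] assms(1) ys_le True
        by (simp add: comp_def)
    qed
    then show ?thesis
      by (simp only:) (simp add: sym_factor_def True sum_distrib_left sum_divide_distrib mult_ac)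
  next
    case False
    then obtain c where "c \<in> set as" "n + X < c"
      by auto
    then have zero: "(\<Prod>j<?k. real (?ys ! j choose rotate i as ! j)) = 0" for i
      using prod_binomial_eq_0[of ?ys "rotate i as" "n + X" c] assms(1) ys_le by simp
    show ?thesis
      unfolding zero by (simp add: sym_factor_def False)
  qed
  finally show ?thesis .
qed

theorem lemma5p1:
  fixes k n xstar :: nat and p :: real and as :: "nat list"
  assumes "k > 0" and "n > 0" and "xstar > 0"
    and "0 < p" and "p < 1"
    and "length as = k"
  defines "n' \<equiv> p * real n"
    and "b \<equiv> (\<lambda>j::nat. real (as ! ((j - 1) mod k)) - real n * (1 - p))"
  shows "\<exists>Sym :: nat list \<Rightarrow> real.
     (\<forall>xs ys. length xs = k \<and> set xs \<subseteq> {0..xstar} \<and> mset ys = mset xs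
        \<longrightarrow> Sym ys = Sym xs) \<and>
     (\<forall>s a xs. a = rotate s (block_string as) \<and> length xs = k \<and> set xs \<subseteq> {0..xstar} \<longrightarrow>
        del_prob p (block_string (map (\<lambda>c. n + c) xs)) a =
          Sym xs * (\<Sum>i=1..k. \<Prod>j=1..k. \<Prod>h=xs ! (j - 1) + 1..xstar.
                       (n' - b (j + i) + real h)))"
proof -
  have shifted_sum:
    "(\<Sum>i=1..k. \<Prod>j=1..k. \<Prod>h=xs ! (j - 1) + 1..xstar. (n' - b (j + i) + real h)) =
     (\<Sum>i<k. \<Prod>j<k. \<Prod>h=xs ! j + 1..xstar. real n - real (rotate i as ! j) + real h)"
    for xs :: "nat list"
  proof -
    let ?term = "\<lambda>i. \<Prod>j<k. \<Prod>h=xs ! j + 1..xstar. real n - real (rotate i as ! j) + real h"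
    have "n' - b (Suc j + Suc i) = real n - real (rotate ((i + 1) mod k) as ! j)" if "j < k" for i j
      using that assms(6) by (simp add: n'_def b_def nth_rotate mod_add_right_eq algebra_simps)
    then have "(\<Sum>i=1..k. \<Prod>j=1..k. \<Prod>h=xs ! (j - 1) + 1..xstar. (n' - b (j + i) + real h)) =
        (\<Sum>i<k. ?term ((i + 1) mod k))"
      by (simp add: sum.atLeast1_atMost_eq prod.atLeast1_atMost_eq)
    also have "\<dots> = (\<Sum>i<k. ?term i)"
      by (rule sum_lessThan_mod_shift)
    finally show ?thesis .
  qed
  show ?thesis
    unfolding shifted_sum using assms(1,6)
    by (intro exI[of _ "sym_factor p n xstar as"] conjI allI impI)
      (auto simp: del_prob_block_string_shifted intro: sym_factor_mset_eq)
qed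

end
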